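(* Let $M$ and $\gamma$ be positive integers with $\gamma$ squarefree, and let $[a_1:b_1]\in\mathbb{P}^1(\mathbb{Z}/M\mathbb{Z})$. Then for $N\ge1$, $$\left|\left\{(a,b)\in\mathbb{Z}^2\setminus\{(0,0)\}:(a,b)\in\mathcal{R}_N,\ \gamma\mid\gcd(a,b),\ (a,b)\equiv\lambda(a_1,b_1)\bmod M\text{ for some }\lambda\in\mathbb{Z}\right\}\right|=\frac{N^{\frac{1}{6m}}V\gcd(\gamma,M)}{\gamma^2M}+O\!\left(\frac{N^{\frac{1}{12m}}}{\gamma}\right),$$ where the implied constant depends only on $\mathcal{R}_1$. Moreover there is a constant $c>0$ depending only on $\mathcal{R}_1$ such that the set is empty if $\gamma>cN^{\frac{1}{12m}}$.
   Context: Let $m$ be a positive integer and $f,g\in\mathbb{Z}[t]$ with $4f^3+27g^2\ne0$, no common real root, and $\max\{\frac12\deg f,\frac13\deg g\}=2m$. Let $A(x,y)=y^{4m}f(x/y)$, $B(x,y)=y^{6m}g(x/y)$. $\mathcal{R}_N=\{(x,y)\in\mathbb{R}^2:|A(x,y)|\le(N/4)^{1/3},\ |B(x,y)|\le(N/27)^{1/2}\}$ and $V=\mathrm{Vol}(\mathcal{R}_1)$. Elements $[a_1:b_1]\in\mathbb{P}^1(\mathbb{Z}/M\mathbb{Z})$ are represented by $a_1,b_1\in\mathbb{Z}$ with $\gcd(a_1,b_1,M)=1$. *)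

theory Defs
  imports "HOL-Analysis.Analysis" "HOL-Computational_Algebra.Computational_Algebra" "HOL-Number_Theory.Cong"
begin

text \<open>Homogenisation of degree d of an integer polynomial p:
  hom_form d p x y = y^d * p(x/y) (as a polynomial identity), i.e.
  the sum over i of coeff p i * x^i * y^(d-i). Used only when degree p \<le> d.\<close>
definition hom_form :: "nat \<Rightarrow> int poly \<Rightarrow> real \<Rightarrow> real \<Rightarrow> real" where
  "hom_form d p x y = (\<Sum>i\<le>degree p. real_of_int (coeff p i) * x ^ i * y ^ (d - i))"

definition region :: "int poly \<Rightarrow> int poly \<Rightarrow> nat \<Rightarrow> real \<Rightarrow> (real \<times> real) set" where
  "region f g m N = {(x, y). \<bar>hom_form (4*m) f x y\<bar> \<le> (N / 4) powr (1/3)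
                            \<and> \<bar>hom_form (6*m) g x y\<bar> \<le> (N / 27) powr (1/2)}"

definition count_set :: "int poly \<Rightarrow> int poly \<Rightarrow> nat \<Rightarrow> real \<Rightarrow> int \<Rightarrow> int \<Rightarrow> int \<Rightarrow> int \<Rightarrow> (int \<times> int) set" where
  "count_set f g m N \<gamma> M a1 b1 = {(a, b). (a, b) \<noteq> (0, 0)
      \<and> (real_of_int a, real_of_int b) \<in> region f g m N
      \<and> \<gamma> dvd gcd a b
      \<and> (\<exists>l::int. [a = l * a1] (mod M) \<and> [b = l * b1] (mod M))}"

end

theory Submission
  imports Defs
begin

text \<open>
  Since A and B are forms of degrees 4m and 6m, scaling by T = N^(1/(12m)) maps R_1 onto R_N;
  hence R_N has area T^2 V and, R_1 being bounded (A and B have no common nontrivial zero),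
  lies in a disc of radius O(T). Writing a counted point as \<gamma>(a', b'), the points are the
  nonzero points of the lattice L = {(a', b') \<equiv> \<lambda>(a1, b1) mod M'}, M' = M / gcd(\<gamma>, M), lying in
  the region scaled down by \<gamma>. This lattice has index M' and a basis (d1, 0), (c, d2) in
  Hermite normal form. Counting it row by row, where every row and column of the region
  has at most 20m boundary points, gives area / index up to O(T / \<gamma> + 1). Finally, if \<gamma> is
  large compared with T, the scaled region contains no nonzero integer point at all.
\<close>

section \<open>Counting lattice points in planar regions\<close>

lemma progression_cell_discrepancy:
  fixes E :: "real set" and a d :: real
  assumes E: "E \<in> sets lborel" and d: "d > 0"
  shows "\<bar>d * of_bool (a \<in> E) - measure lborel (E \<inter> {a..<a + d})\<bar> \<le> d"
    and "{a..<a + d} \<inter> frontier E = {} \<Longrightarrow> d * of_bool (a \<in> E) - measure lborel (E \<inter> {a..<a + d}) = 0"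
proof -
  have cell: "{a..<a + d} \<in> fmeasurable lborel" "measure lborel {a..<a + d} = d"
    using d by (auto simp: fmeasurable_def)
  have "E \<inter> {a..<a + d} \<in> fmeasurable lborel"
    using E cell(1) by (metis fmeasurable_Int_fmeasurable inf_commute)
  then have "measure lborel (E \<inter> {a..<a + d}) \<le> d"
    using measure_mono_fmeasurable[of "E \<inter> {a..<a + d}" "{a..<a + d}" lborel] cell
    by (auto simp: fmeasurable_def)
  then show "\<bar>d * of_bool (a \<in> E) - measure lborel (E \<inter> {a..<a + d})\<bar> \<le> d"
    using d by auto
  assume "{a..<a + d} \<inter> frontier E = {}"
  \<comment> \<open>a connected cell missing the frontier of E lies inside E or outside E\<close>
  then have "{a..<a + d} \<subseteq> E \<or> {a..<a + d} \<inter> E = {}"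
    using connected_Int_frontier[of "{a..<a + d}" E] by (auto simp: is_interval_connected)
  moreover have "a \<in> {a..<a + d}" using d by simp
  ultimately consider "{a..<a + d} \<subseteq> E" "a \<in> E" | "E \<inter> {a..<a + d} = {}" "a \<notin> E" by blast
  then show "d * of_bool (a \<in> E) - measure lborel (E \<inter> {a..<a + d}) = 0"
    using cell(2) by cases (simp_all add: Int_absorb1)
qed

lemma floor_cell_iff:
  fixes c d x :: real and j :: int
  assumes "d > 0"
  shows "x \<in> {c + d * j..<c + d * j + d} \<longleftrightarrow> \<lfloor>(x - c) / d\<rfloor> = j"
  using assms by (simp add: floor_eq_iff field_simps)

lemma measure_eq_sum_cells:
  fixes E :: "real set" and c d :: real and J :: "int set"
  assumes E: "E \<in> sets lborel" and d: "d > 0" and J: "finite J"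
    and cover: "E \<subseteq> (\<Union>j\<in>J. {c + d * j..<c + d * j + d})"
  shows "measure lborel E = (\<Sum>j\<in>J. measure lborel (E \<inter> {c + d * j..<c + d * j + d}))"
proof -
  have E_cell: "E \<inter> {c + d * j..<c + d * j + d} \<in> fmeasurable lborel" for j
    using E fmeasurable_Int_fmeasurable[of "{c + d * j..<c + d * j + d}" lborel E] d
    by (auto simp: fmeasurable_def Int_commute)
  have "disjoint_family_on (\<lambda>j. E \<inter> {c + d * j..<c + d * j + d}) J"
    using floor_cell_iff[OF d] by (auto simp: disjoint_family_on_def)
  then have "measure lborel (\<Union>j\<in>J. E \<inter> {c + d * j..<c + d * j + d})
      = (\<Sum>j\<in>J. measure lborel (E \<inter> {c + d * j..<c + d * j + d}))"
    using J fmeasurableD[OF E_cell] fmeasurableD2[OF E_cell] by (intro measure_finite_Union) auto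
  moreover have "E = (\<Union>j\<in>J. E \<inter> {c + d * j..<c + d * j + d})" using cover by blast
  ultimately show ?thesis by simp
qed

lemma card_progression_in_set:
  fixes E :: "real set" and c d :: real
  assumes E: "E \<in> sets lborel" "bounded E" "finite (frontier E)" and d: "d > 0"
  shows "finite {j::int. c + d * j \<in> E}"
    and "\<bar>d * card {j::int. c + d * j \<in> E} - measure lborel E\<bar> \<le> d * card (frontier E)"
proof -
  define cell where "cell j = {c + d * of_int j..<c + d * of_int j + d}" for j :: int
  define fl where "fl x = \<lfloor>(x - c) / d\<rfloor>" for x
  have cell_fl: "x \<in> cell j \<longleftrightarrow> fl x = j" for x j
    unfolding cell_def fl_def by (rule floor_cell_iff[OF d])
  obtain R where R: "E \<subseteq> {-R..R}"
    using E(2) bounded_subset_cbox_symmetric by (metis cbox_interval)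
  define J where "J = {fl (-R)..fl R}"
  have fl_J: "fl x \<in> J" if "x \<in> E" for x
    using R that d unfolding J_def fl_def by (auto intro!: floor_mono divide_right_mono)
  have in_J: "j \<in> J" if "c + d * j \<in> E" for j
    using fl_J[OF that] cell_fl[of "c + d * j" j] d by (simp add: cell_def)
  show "finite {j::int. c + d * j \<in> E}"
    by (rule finite_subset[of _ J]) (use in_J J_def in auto)
  define t where "t j = d * of_bool (c + d * j \<in> E) - measure lborel (E \<inter> cell j)" for j
  define B where "B = {j\<in>J. cell j \<inter> frontier E \<noteq> {}}"
  have "J \<inter> {j. c + d * j \<in> E} = {j::int. c + d * j \<in> E}"
    using in_J by blast
  then have "d * card {j::int. c + d * j \<in> E} = (\<Sum>j\<in>J. d * of_bool (c + d * j \<in> E))"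
    by (simp add: J_def flip: sum_distrib_left)
  moreover have "measure lborel E = (\<Sum>j\<in>J. measure lborel (E \<inter> cell j))"
    unfolding cell_def using fl_J cell_fl by (intro measure_eq_sum_cells E(1) d) (auto simp: J_def cell_def)
  ultimately have "d * card {j::int. c + d * j \<in> E} - measure lborel E = (\<Sum>j\<in>J. t j)"
    by (simp add: t_def sum_subtractf)
  also have "\<dots> = (\<Sum>j\<in>B. t j)"
    using progression_cell_discrepancy(2)[OF E(1) d] unfolding t_def cell_def B_def
    by (intro sum.mono_neutral_right) (auto simp: J_def)
  finally have "\<bar>d * card {j::int. c + d * j \<in> E} - measure lborel E\<bar> = \<bar>\<Sum>j\<in>B. t j\<bar>"
    by simp
  also have "\<dots> \<le> d * card B"
    using order_trans[OF sum_abs[of t B] sum_mono[of B "\<lambda>j. \<bar>t j\<bar>" "\<lambda>_. d"]]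
      progression_cell_discrepancy(1)[OF E(1) d] by (simp add: t_def cell_def mult.commute)
  also have "\<dots> \<le> d * card (frontier E)"
  proof -
    have "B \<subseteq> fl ` frontier E" by (force simp: B_def cell_fl)
    then have "card B \<le> card (frontier E)"
      using E(3) by (meson card_image_le card_mono finite_imageI le_trans)
    then show ?thesis using d by simp
  qed
  finally show "\<bar>d * card {j::int. c + d * j \<in> E} - measure lborel E\<bar> \<le> d * card (frontier E)" .
qed

lemma closed_row:
  fixes S :: "('a::topological_space \<times> 'b::t2_space) set"
  assumes "closed S"
  shows "closed {x. (x, y) \<in> S}"
proof -
  have "{x. (x, y) \<in> S} = (\<lambda>x. (x, y)) -` S" by auto
  then show ?thesis by (simp only:) (intro continuous_closed_vimage assms continuous_intros)
qed

lemma closed_column: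
  fixes S :: "('a::t2_space \<times> 'b::topological_space) set"
  assumes "closed S"
  shows "closed {y. (x, y) \<in> S}"
proof -
  have "{y. (x, y) \<in> S} = (\<lambda>y. (x, y)) -` S" by auto
  then show ?thesis by (simp only:) (intro continuous_closed_vimage assms continuous_intros)
qed

lemma floor_interval_mem:
  fixes d R :: real and j :: int
  assumes "d > 0" "\<bar>d * j\<bar> \<le> R"
  shows "j \<in> {-\<lfloor>R / d\<rfloor>..\<lfloor>R / d\<rfloor>}"
proof -
  have "\<bar>real_of_int j\<bar> \<le> R / d" using assms by (simp add: abs_mult field_simps)
  then show ?thesis by (simp add: abs_le_iff) linarith
qed

lemma card_floor_interval:
  fixes d R :: real
  assumes "d > 0" "R \<ge> 0"
  shows "real (card {-\<lfloor>R / d\<rfloor>..\<lfloor>R / d\<rfloor>}) \<le> 2 * R / d + 1"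
proof -
  have "\<lfloor>R / d\<rfloor> \<ge> 0" using assms by simp
  then have "real (card {-\<lfloor>R / d\<rfloor>..\<lfloor>R / d\<rfloor>}) = 2 * \<lfloor>R / d\<rfloor> + 1" by simp
  moreover have "real_of_int \<lfloor>R / d\<rfloor> \<le> R / d" by linarith
  moreover have "2 * R / d = 2 * (R / d)" by simp
  ultimately show ?thesis by linarith
qed

lemma integral_column_measures:
  fixes S :: "(real \<times> real) set"
  assumes S: "S \<in> sets borel" "bounded S"
  shows "integrable lborel (\<lambda>x. measure lborel {y. (x, y) \<in> S})"
    and "(\<integral>x. measure lborel {y. (x, y) \<in> S} \<partial>lborel) = measure lborel S"
proof -
  have int_S: "integrable (lborel \<Otimes>\<^sub>M lborel) (indicator S :: real \<times> real \<Rightarrow> real)"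
    unfolding lborel_prod using S emeasure_bounded_finite[OF S(2)]
    by (simp add: integrable_indicator_iff)
  have column: "(\<integral>y. indicator S (x, y) \<partial>lborel) = measure lborel {y. (x, y) \<in> S}" for x
  proof -
    have "(\<lambda>y. indicator S (x, y) :: real) = indicator {y. (x, y) \<in> S}"
      by (auto simp: indicator_def)
    moreover have "{y. (x, y) \<in> S} \<in> sets borel"
      using measurable_Pair2'[of x] S(1) by (auto simp: measurable_def vimage_def)
    ultimately show ?thesis by simp
  qed
  show "integrable lborel (\<lambda>x. measure lborel {y. (x, y) \<in> S})"
    using lborel_pair.integrable_fst'[OF int_S] unfolding column .
  show "(\<integral>x. measure lborel {y. (x, y) \<in> S} \<partial>lborel) = measure lborel S"
    using lborel_pair.integral_fst'[OF int_S] S(1) unfolding column lborel_prod by simp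
qed

lemma column_progression_count:
  fixes S :: "(real \<times> real) set" and d R :: real and k :: nat
  assumes S: "closed S" "S \<subseteq> {-R..R} \<times> {-R..R}" and d: "d > 0"
    and column: "finite (frontier {y. (x, y) \<in> S})" "card (frontier {y. (x, y) \<in> S}) \<le> k"
  shows "\<bar>d * card {j::int. (x, d * j) \<in> S} - measure lborel {y. (x, y) \<in> S}\<bar>
    \<le> indicator {-R..R} x * (d * k)"
proof (cases "x \<in> {-R..R}")
  case True
  have "closed {y. (x, y) \<in> S}" using S(1) by (rule closed_column)
  moreover have "bounded {y. (x, y) \<in> S}"
    by (rule bounded_subset[of "{-R..R}"]) (use S(2) in auto)
  ultimately have "\<bar>d * card {j::int. (x, d * j) \<in> S} - measure lborel {y. (x, y) \<in> S}\<bar>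
      \<le> d * card (frontier {y. (x, y) \<in> S})"
    using card_progression_in_set(2)[of "{y. (x, y) \<in> S}" d 0] column d by simp
  also have "\<dots> \<le> d * k" using column d by simp
  finally show ?thesis using True by simp
next
  case False
  then have "(x, y) \<notin> S" for y using S(2) by blast
  then show ?thesis using False by simp
qed

lemma sum_row_measures_approx:
  fixes S :: "(real \<times> real) set" and d R :: real and k :: nat
  assumes S: "closed S" "S \<subseteq> {-R..R} \<times> {-R..R}" and R: "R \<ge> 0" and d: "d > 0"
    and columns: "\<And>x. finite (frontier {y. (x, y) \<in> S}) \<and> card (frontier {y. (x, y) \<in> S}) \<le> k"
  shows "\<bar>d * (\<Sum>j\<in>{-\<lfloor>R / d\<rfloor>..\<lfloor>R / d\<rfloor>}. measure lborel {x. (x, d * j) \<in> S}) - measure lborel S\<bar>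
    \<le> 2 * R * d * k"
proof -
  define J where "J = {-\<lfloor>R / d\<rfloor>..\<lfloor>R / d\<rfloor>}"
  define E where "E j = {x. (x, d * of_int j) \<in> S}" for j
  define h where "h x = (\<Sum>j\<in>J. indicator (E j) x :: real)" for x
  have in_J: "j \<in> J" if "(x, d * of_int j) \<in> S" for x j
  proof -
    have "d * of_int j \<in> {-R..R}" using S(2) that by blast
    then have "\<bar>d * of_int j\<bar> \<le> R" by (simp add: abs_le_iff)
    then show ?thesis unfolding J_def by (rule floor_interval_mem[OF d])
  qed
  have "closed (E j)" for j
    unfolding E_def using S(1) by (rule closed_row)
  moreover have "E j \<subseteq> {-R..R}" for j using S(2) by (auto simp: E_def)
  moreover have "emeasure lborel (E j) < \<infinity>" for j
    using \<open>E j \<subseteq> {-R..R}\<close> by (intro emeasure_bounded_finite) (meson bounded_closed_interval bounded_subset)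
  ultimately have E_int: "integrable lborel (indicator (E j) :: real \<Rightarrow> real)" for j
    by (simp add: integrable_indicator_iff)
  have h_int: "integrable lborel h" unfolding h_def by (simp add: E_int)
  have h_integral: "(\<integral>x. h x \<partial>lborel) = (\<Sum>j\<in>J. measure lborel (E j))"
    unfolding h_def using E_int by (simp add: Bochner_Integration.integral_sum)
  have "h x = card {j. (x, d * of_int j) \<in> S}" for x
  proof -
    have "{j. (x, d * of_int j) \<in> S} = {j\<in>J. x \<in> E j}" using in_J by (auto simp: E_def)
    then show ?thesis by (simp add: h_def indicator_def J_def of_bool_def[symmetric] Int_def)
  qed
  then have column: "\<bar>d * h x - measure lborel {y. (x, y) \<in> S}\<bar> \<le> indicator {-R..R} x * (d * k)" for x
    using column_progression_count[OF S d] columns by simp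
  have F_int: "integrable lborel (\<lambda>x. measure lborel {y. (x, y) \<in> S})"
    and F_integral: "(\<integral>x. measure lborel {y. (x, y) \<in> S} \<partial>lborel) = measure lborel S"
    using integral_column_measures[OF _ bounded_subset[OF _ S(2)]] S(1) by (simp_all add: bounded_Times)
  have box_int: "integrable lborel (\<lambda>x. indicator {-R..R} x * (d * k) :: real)"
    by (simp add: integrable_indicator_iff emeasure_lborel_Icc_eq)
  have "\<bar>d * (\<Sum>j\<in>J. measure lborel (E j)) - measure lborel S\<bar>
      = \<bar>\<integral>x. d * h x - measure lborel {y. (x, y) \<in> S} \<partial>lborel\<bar>"
    using h_int F_int by (simp add: h_integral F_integral)
  also have "\<dots> \<le> (\<integral>x. indicator {-R..R} x * (d * k) \<partial>lborel)"
    by (rule integral_abs_bound_integral) (use h_int F_int box_int column in auto)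
  also have "\<dots> = 2 * R * d * k" using R by simp
  finally show ?thesis by (simp add: J_def E_def)
qed

text \<open>
  hermite_form L d1 d2 cc describes L row by row: L has points of height b only if d2 divides b,
  and these form the coset cc (b div d2) + d1\<int>. For a lattice L this is its Hermite normal form.
\<close>

definition hermite_form :: "(int \<times> int) set \<Rightarrow> int \<Rightarrow> int \<Rightarrow> (int \<Rightarrow> int) \<Rightarrow> bool" where
  "hermite_form L d1 d2 cc \<longleftrightarrow> d1 > 0 \<and> d2 > 0 \<and>
     (\<forall>a b. (a, b) \<in> L \<longleftrightarrow> d2 dvd b \<and> d1 dvd a - cc (b div d2))"

lemma hermite_form_parametrisation:
  assumes "hermite_form L d1 d2 cc"
  shows "bij_betw (\<lambda>(j, i). (cc j + d1 * i, d2 * j)) {(j, i). (cc j + d1 * i, d2 * j) \<in> A} (L \<inter> A)"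
proof (rule bij_betwI')
  fix p q :: "int \<times> int"
  show "((\<lambda>(j, i). (cc j + d1 * i, d2 * j)) p = (\<lambda>(j, i). (cc j + d1 * i, d2 * j)) q) = (p = q)"
    using assms by (auto simp: hermite_form_def split: prod.splits)
next
  fix p assume "p \<in> {(j, i). (cc j + d1 * i, d2 * j) \<in> A}"
  then show "(\<lambda>(j, i). (cc j + d1 * i, d2 * j)) p \<in> L \<inter> A"
    using assms by (auto simp: hermite_form_def)
next
  fix q assume "q \<in> L \<inter> A"
  then obtain a b where q: "q = (a, b)" "(a, b) \<in> L" "(a, b) \<in> A" by (cases q) auto
  define j where "j = b div d2"
  define i where "i = (a - cc j) div d1"
  have "b = d2 * j" "a = cc j + d1 * i" using q(2) assms by (auto simp: hermite_form_def i_def j_def)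
  then show "\<exists>p\<in>{(j, i). (cc j + d1 * i, d2 * j) \<in> A}. q = (\<lambda>(j, i). (cc j + d1 * i, d2 * j)) p"
    using q by (intro bexI[of _ "(j, i)"]) auto
qed

lemma card_hermite_lattice_rows:
  fixes S :: "(real \<times> real) set" and d1 d2 :: int and R :: real and k :: nat
  assumes L: "hermite_form L d1 d2 cc"
    and S: "closed S" "S \<subseteq> {-R..R} \<times> {-R..R}" and R: "R \<ge> 0"
    and rows: "\<And>y. finite (frontier {x. (x, y) \<in> S}) \<and> card (frontier {x. (x, y) \<in> S}) \<le> k"
  shows "finite {p\<in>L. map_prod real_of_int real_of_int p \<in> S}"
    and "\<bar>card {p\<in>L. map_prod real_of_int real_of_int p \<in> S}
          - (\<Sum>j\<in>{-\<lfloor>R / d2\<rfloor>..\<lfloor>R / d2\<rfloor>}. measure lborel {x. (x, d2 * j) \<in> S}) / d1\<bar>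
         \<le> k * (2 * R / d2 + 1)"
proof -
  have d: "d1 > 0" "d2 > 0" using L by (auto simp: hermite_form_def)
  define J where "J = {-\<lfloor>R / d2\<rfloor>..\<lfloor>R / d2\<rfloor>}"
  define E where "E j = {x. (x, real_of_int d2 * j) \<in> S}" for j :: int
  define B where "B j = {i::int. cc j + real_of_int d1 * i \<in> E j}" for j
  have row_count: "finite (B j) \<and> \<bar>card (B j) - measure lborel (E j) / d1\<bar> \<le> k" for j
  proof -
    have "closed (E j)" unfolding E_def using S(1) by (rule closed_row)
    moreover have "bounded (E j)"
      by (rule bounded_subset[of "{-R..R}"]) (use S(2) in \<open>auto simp: E_def\<close>)
    ultimately have "finite (B j)" "\<bar>d1 * card (B j) - measure lborel (E j)\<bar> \<le> d1 * k"
      using card_progression_in_set[of "E j" d1 "cc j"] rows[of "d2 * j"] d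
      by (auto simp: B_def E_def intro: order_trans)
    then show ?thesis using d by (simp add: field_simps abs_divide)
  qed
  have "j \<in> J" if "(x, real_of_int d2 * j) \<in> S" for x j
  proof -
    have "real_of_int d2 * j \<in> {-R..R}" using S(2) that by blast
    then show ?thesis unfolding J_def using d by (intro floor_interval_mem) (auto simp: abs_le_iff)
  qed
  then have "{(j, i). (cc j + d1 * i, d2 * j) \<in> {p. map_prod real_of_int real_of_int p \<in> S}} = Sigma J B"
    by (auto simp: B_def E_def)
  from hermite_form_parametrisation[OF L, of "{p. map_prod real_of_int real_of_int p \<in> S}", unfolded this]
  have bij: "bij_betw (\<lambda>(j, i). (cc j + d1 * i, d2 * j)) (Sigma J B) {p\<in>L. map_prod real_of_int real_of_int p \<in> S}"
    by (simp add: Int_def)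
  show "finite {p\<in>L. map_prod real_of_int real_of_int p \<in> S}"
    using bij_betw_finite[OF bij] row_count by (auto simp: J_def)
  have "card {p\<in>L. map_prod real_of_int real_of_int p \<in> S} = (\<Sum>j\<in>J. card (B j))"
    using bij_betw_same_card[OF bij] row_count by (simp add: J_def card_SigmaI)
  then have "\<bar>card {p\<in>L. map_prod real_of_int real_of_int p \<in> S} - (\<Sum>j\<in>J. measure lborel (E j)) / d1\<bar>
      = \<bar>\<Sum>j\<in>J. card (B j) - measure lborel (E j) / d1\<bar>"
    by (simp add: sum_subtractf sum_divide_distrib)
  also have "\<dots> \<le> (\<Sum>j\<in>J. \<bar>card (B j) - measure lborel (E j) / d1\<bar>)"
    by (rule sum_abs)
  also have "\<dots> \<le> k * card J" using row_count sum_mono[of J _ "\<lambda>_. real k"] by (simp add: mult.commute)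
  also have "\<dots> \<le> k * (2 * R / d2 + 1)"
    using card_floor_interval[of "real_of_int d2" R] d R by (simp add: J_def mult_left_mono)
  finally show "\<bar>card {p\<in>L. map_prod real_of_int real_of_int p \<in> S}
          - (\<Sum>j\<in>{-\<lfloor>R / d2\<rfloor>..\<lfloor>R / d2\<rfloor>}. measure lborel {x. (x, d2 * j) \<in> S}) / d1\<bar>
         \<le> k * (2 * R / d2 + 1)"
    by (simp add: J_def E_def)
qed

lemma card_hermite_lattice_region:
  fixes S :: "(real \<times> real) set" and d1 d2 :: int and R :: real and k :: nat
  assumes L: "hermite_form L d1 d2 cc"
    and S: "closed S" "S \<subseteq> {-R..R} \<times> {-R..R}" and R: "R \<ge> 0"
    and rows: "\<And>y. finite (frontier {x. (x, y) \<in> S}) \<and> card (frontier {x. (x, y) \<in> S}) \<le> k"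
    and columns: "\<And>x. finite (frontier {y. (x, y) \<in> S}) \<and> card (frontier {y. (x, y) \<in> S}) \<le> k"
  shows "finite {p\<in>L. map_prod real_of_int real_of_int p \<in> S}"
    and "\<bar>card {p\<in>L. map_prod real_of_int real_of_int p \<in> S} - measure lborel S / (d1 * d2)\<bar>
           \<le> k * (2 * R / d2 + 1) + 2 * R * k / d1"
proof -
  have d: "d1 > 0" "d2 > 0" using L by (auto simp: hermite_form_def)
  define \<Sigma> where "\<Sigma> = (\<Sum>j\<in>{-\<lfloor>R / d2\<rfloor>..\<lfloor>R / d2\<rfloor>}. measure lborel {x. (x, d2 * j) \<in> S})"
  note rows_estimate = card_hermite_lattice_rows[OF L S R rows, folded \<Sigma>_def]
  show "finite {p\<in>L. map_prod real_of_int real_of_int p \<in> S}" by (fact rows_estimate(1))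
  have "\<bar>d2 * \<Sigma> - measure lborel S\<bar> \<le> 2 * R * d2 * k"
    using sum_row_measures_approx[OF S R _ columns, of "real_of_int d2"] d by (simp add: \<Sigma>_def)
  then have "\<bar>\<Sigma> / d1 - measure lborel S / (d1 * d2)\<bar> \<le> 2 * R * k / d1"
    using d by (simp add: field_simps abs_divide)
  then show "\<bar>card {p\<in>L. map_prod real_of_int real_of_int p \<in> S} - measure lborel S / (d1 * d2)\<bar>
      \<le> k * (2 * R / d2 + 1) + 2 * R * k / d1"
    using rows_estimate(2) by linarith
qed

section \<open>Lattices in the integer plane\<close>

lemma int_subgroup_eq_multiples:
  fixes H :: "int set"
  assumes H0: "0 \<in> H" and H_diff: "\<And>x y. x \<in> H \<Longrightarrow> y \<in> H \<Longrightarrow> x - y \<in> H"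
    and p: "p \<in> H" "p > 0"
  shows "\<exists>e>0. \<forall>x. x \<in> H \<longleftrightarrow> e dvd x"
proof -
  have H_mult: "x * t \<in> H" if "x \<in> H" for x t
  proof (induction t rule: int_induct[where k = 0])
    case (step1 i)
    have "x * (i + 1) = x * i - (0 - x)" by (simp add: algebra_simps)
    then show ?case using step1 H_diff H0 that by metis
  next
    case (step2 i)
    have "x * (i - 1) = x * i - x" by (simp add: algebra_simps)
    then show ?case using step2 H_diff that by metis
  qed (use H0 in simp)
  define e where "e = (LEAST n::nat. n > 0 \<and> int n \<in> H)"
  have e: "e > 0" "int e \<in> H"
    using LeastI[of "\<lambda>n. n > 0 \<and> int n \<in> H" "nat p"] p by (simp_all add: e_def)
  have e_least: "e \<le> n" if "n > 0" "int n \<in> H" for n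
    unfolding e_def using that by (simp add: Least_le)
  have "x \<in> H \<longleftrightarrow> int e dvd x" for x
  proof
    assume "x \<in> H"
    then have "x mod int e \<in> H"
      using H_diff[OF _ H_mult[OF e(2)], of x "x div int e"] by (simp add: minus_mult_div_eq_mod)
    moreover have "x mod int e < int e" using e(1) by simp
    ultimately have "\<not> (0 < x mod int e)"
      using e_least[of "nat (x mod int e)"] by fastforce
    moreover have "0 \<le> x mod int e" using e(1) by simp
    ultimately show "int e dvd x" by (simp add: dvd_eq_mod_eq_0)
  qed (use H_mult[OF e(2)] in auto)
  then show ?thesis using e(1) by (intro exI[of _ "int e"]) simp
qed

lemma hermite_form_exists:
  fixes L :: "(int \<times> int) set"
  assumes L0: "0 \<in> L" and L_diff: "\<And>p q. p \<in> L \<Longrightarrow> q \<in> L \<Longrightarrow> p - q \<in> L"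
    and Q: "Q > 0" "(Q, 0) \<in> L" "(0, Q) \<in> L"
  shows "\<exists>d1 d2 cc. hermite_form L d1 d2 cc \<and> d1 dvd Q \<and> d2 dvd Q"
proof -
  obtain d1 where d1: "d1 > 0" "\<And>x. (x, 0) \<in> L \<longleftrightarrow> d1 dvd x"
    using int_subgroup_eq_multiples[of "{x. (x, 0) \<in> L}" Q] L0 L_diff[of "(_, 0)" "(_, 0)"] Q
    by (auto simp: zero_prod_def)
  obtain d2 where d2: "d2 > 0" "\<And>y. (\<exists>x. (x, y) \<in> L) \<longleftrightarrow> d2 dvd y"
    using int_subgroup_eq_multiples[of "{y. \<exists>x. (x, y) \<in> L}" Q] L0 Q
      L_diff[of "(_, _)" "(_, _)"] by (fastforce simp: zero_prod_def)
  define cc where "cc j = (SOME a. (a, d2 * j) \<in> L)" for j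
  have cc: "(cc j, d2 * j) \<in> L" for j
    unfolding cc_def by (rule someI_ex) (use d2(2) in auto)
  have L_add: "p + q \<in> L" if "p \<in> L" "q \<in> L" for p q
    using L_diff[OF that(1) L_diff[OF L0 that(2)]] by simp
  have "(a, b) \<in> L \<longleftrightarrow> d2 dvd b \<and> d1 dvd a - cc (b div d2)" for a b
  proof
    assume ab: "(a, b) \<in> L"
    then have "d2 dvd b" using d2(2) by auto
    then show "d2 dvd b \<and> d1 dvd a - cc (b div d2)"
      using L_diff[OF ab cc[of "b div d2"]] d1(2) by simp
  next
    assume "d2 dvd b \<and> d1 dvd a - cc (b div d2)"
    then show "(a, b) \<in> L"
      using L_add[OF _ cc[of "b div d2"], of "(a - cc (b div d2), 0)"] d1(2) by simp
  qed
  moreover have "d1 dvd Q" "d2 dvd Q" using d1(2) d2(2) Q by blast+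
  ultimately show ?thesis using d1(1) d2(1) unfolding hermite_form_def by blast
qed

lemma offset_multiple_in_interval:
  fixes c d i Q :: int
  assumes "0 \<le> c" "c < d" "d dvd Q"
  shows "0 \<le> c + d * i \<and> c + d * i < Q \<longleftrightarrow> 0 \<le> i \<and> i < Q div d"
proof -
  obtain q where Q: "Q = d * q" using assms(3) by blast
  have "0 \<le> c + d * i \<longleftrightarrow> 0 \<le> i"
  proof (cases "0 \<le> i")
    case False
    then have "d * i \<le> d * (-1)" using assms(1,2) by (intro mult_left_mono) auto
    then show ?thesis using False assms(2) by simp
  qed (use assms(1,2) in simp)
  moreover have "c + d * i < d * q \<longleftrightarrow> i < q"
  proof
    assume "c + d * i < d * q"
    then have "d * i < d * q" using assms(1) by linarith
    then show "i < q" using assms(1,2) by (simp add: mult_less_cancel_left)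
  next
    assume "i < q"
    then have "d * (i + 1) \<le> d * q" using assms(1,2) by (intro mult_left_mono) auto
    then show "c + d * i < d * q" using assms(2) by (simp add: algebra_simps)
  qed
  ultimately show ?thesis using Q assms by simp
qed

lemma card_hermite_lattice_box:
  assumes L: "hermite_form L d1 d2 cc" and Q: "d1 dvd Q" "d2 dvd Q"
  shows "card (L \<inter> {0..<Q} \<times> {0..<Q}) = nat (Q div d1) * nat (Q div d2)"
proof -
  have d: "d1 > 0" "d2 > 0" using L by (auto simp: hermite_form_def)
  define cc' where "cc' j = cc j mod d1" for j
  have L': "hermite_form L d1 d2 cc'"
    using L by (simp add: hermite_form_def cc'_def mod_eq_dvd_iff[symmetric] mod_diff_right_eq)
  have box_params: "{(j, i). (cc' j + d1 * i, d2 * j) \<in> {0..<Q} \<times> {0..<Q}} = {0..<Q div d2} \<times> {0..<Q div d1}"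
    using offset_multiple_in_interval[where c = "cc' _" and d = d1 and Q = Q]
      offset_multiple_in_interval[where c = 0 and d = d2 and Q = Q] d Q
    by (auto simp: cc'_def)
  have "card (L \<inter> {0..<Q} \<times> {0..<Q}) = card ({0..<Q div d2} \<times> {0..<Q div d1})"
    using bij_betw_same_card[OF hermite_form_parametrisation[OF L', of "{0..<Q} \<times> {0..<Q}"]]
    unfolding box_params by (rule sym)
  then show ?thesis by (simp add: card_cartesian_product)
qed

definition cong_lattice :: "int \<Rightarrow> int \<Rightarrow> int \<Rightarrow> (int \<times> int) set" where
  "cong_lattice M a1 b1 = {(a, b). \<exists>l. [a = l * a1] (mod M) \<and> [b = l * b1] (mod M)}"

lemma cong_lattice_subgroup:
  shows "0 \<in> cong_lattice M a1 b1"
    and "p \<in> cong_lattice M a1 b1 \<Longrightarrow> q \<in> cong_lattice M a1 b1 \<Longrightarrow> p - q \<in> cong_lattice M a1 b1"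
    and "(M, 0) \<in> cong_lattice M a1 b1" "(0, M) \<in> cong_lattice M a1 b1"
proof -
  show "0 \<in> cong_lattice M a1 b1" "(M, 0) \<in> cong_lattice M a1 b1" "(0, M) \<in> cong_lattice M a1 b1"
    by (auto simp: cong_lattice_def zero_prod_def cong_0_iff intro!: exI[of _ 0])
  assume "p \<in> cong_lattice M a1 b1" "q \<in> cong_lattice M a1 b1"
  then obtain a b l a' b' l' where pq: "p = (a, b)" "q = (a', b')"
    and "[a = l * a1] (mod M)" "[b = l * b1] (mod M)" "[a' = l' * a1] (mod M)" "[b' = l' * b1] (mod M)"
    by (auto simp: cong_lattice_def)
  then have "[a - a' = (l - l') * a1] (mod M)" "[b - b' = (l - l') * b1] (mod M)"
    by (auto simp: left_diff_distrib intro: cong_diff)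
  then show "p - q \<in> cong_lattice M a1 b1" by (auto simp: cong_lattice_def pq)
qed

lemma coprime_gcd_dvd_cancel:
  fixes x l a b :: int
  assumes "coprime x (gcd a b)" "x dvd l * a" "x dvd l * b"
  shows "x dvd l"
proof -
  have "x dvd \<bar>l\<bar> * gcd a b" using assms(2,3) by (simp add: gcd_mult_distrib_int)
  then show ?thesis using assms(1) by (simp add: coprime_dvd_mult_left_iff)
qed

lemma card_cong_lattice_box:
  assumes M: "M > 0" and primitive: "coprime (gcd a1 b1) M"
  shows "card (cong_lattice M a1 b1 \<inter> {0..<M} \<times> {0..<M}) = nat M"
proof -
  have "bij_betw (\<lambda>\<mu>. ((\<mu> * a1) mod M, (\<mu> * b1) mod M)) {0..<M} (cong_lattice M a1 b1 \<inter> {0..<M} \<times> {0..<M})"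
  proof (rule bij_betwI')
    fix \<mu> \<nu> assume range: "\<mu> \<in> {0..<M}" "\<nu> \<in> {0..<M}"
    show "(((\<mu> * a1) mod M, (\<mu> * b1) mod M) = ((\<nu> * a1) mod M, (\<nu> * b1) mod M)) = (\<mu> = \<nu>)"
    proof
      assume "((\<mu> * a1) mod M, (\<mu> * b1) mod M) = ((\<nu> * a1) mod M, (\<nu> * b1) mod M)"
      then have "M dvd (\<mu> - \<nu>) * a1" "M dvd (\<mu> - \<nu>) * b1"
        by (simp_all add: mod_eq_dvd_iff left_diff_distrib)
      then have "M dvd \<mu> - \<nu>"
        using primitive coprime_gcd_dvd_cancel coprime_commute by blast
      then show "\<mu> = \<nu>"
        using range by (metis atLeastLessThan_iff mod_eq_dvd_iff mod_pos_pos_trivial)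
    qed simp
  next
    fix \<mu> show "((\<mu> * a1) mod M, (\<mu> * b1) mod M) \<in> cong_lattice M a1 b1 \<inter> {0..<M} \<times> {0..<M}"
      using M by (auto simp: cong_lattice_def cong_def)
  next
    fix q assume "q \<in> cong_lattice M a1 b1 \<inter> {0..<M} \<times> {0..<M}"
    then obtain a b l where q: "q = (a, b)" "[a = l * a1] (mod M)" "[b = l * b1] (mod M)"
      and range: "a \<in> {0..<M}" "b \<in> {0..<M}"
      by (auto simp: cong_lattice_def)
    then have "a = ((l mod M) * a1) mod M" "b = ((l mod M) * b1) mod M"
      by (auto simp: cong_def mod_mult_left_eq mod_pos_pos_trivial)
    then show "\<exists>\<mu>\<in>{0..<M}. q = ((\<mu> * a1) mod M, (\<mu> * b1) mod M)"
      using q M by (intro bexI[of _ "l mod M"]) auto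
  qed
  then show ?thesis by (simp add: bij_betw_same_card[symmetric])
qed

lemma cong_lattice_hermite_form:
  assumes M: "M > 0" and primitive: "coprime (gcd a1 b1) M"
  shows "\<exists>d1 d2 cc. hermite_form (cong_lattice M a1 b1) d1 d2 cc \<and> d1 * d2 = M"
proof -
  obtain d1 d2 cc where H: "hermite_form (cong_lattice M a1 b1) d1 d2 cc" and dvd: "d1 dvd M" "d2 dvd M"
    using hermite_form_exists[OF cong_lattice_subgroup(1,2) M cong_lattice_subgroup(3,4)] by blast
  have d: "d1 > 0" "d2 > 0" using H by (auto simp: hermite_form_def)
  \<comment> \<open>count the lattice points in the box [0, M)^2 in two ways\<close>
  have "(M div d1) * (M div d2) = M"
    using card_hermite_lattice_box[OF H dvd] card_cong_lattice_box[OF M primitive] d M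
    by (simp add: nat_mult_distrib[symmetric] pos_imp_zdiv_nonneg_iff)
  then have "M * M = (d1 * d2) * M"
    using dvd by (metis dvd_div_mult_self mult.assoc mult.left_commute)
  then have "d1 * d2 = M" using M by simp
  then show ?thesis using H by blast
qed

lemma cong_lattice_coprime_scale:
  assumes "coprime c M"
  shows "(c * a, c * b) \<in> cong_lattice M a1 b1 \<longleftrightarrow> (a, b) \<in> cong_lattice M a1 b1"
proof
  obtain u where u: "[c * u = 1] (mod M)" using cong_solve_coprime_int[OF assms] by blast
  have inverse: "[c * (u * y) = y] (mod M)" for y
    using cong_scalar_right[OF u, of y] by (simp add: mult.assoc)
  assume "(c * a, c * b) \<in> cong_lattice M a1 b1"
  then obtain l where "[c * a = l * a1] (mod M)" "[c * b = l * b1] (mod M)"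
    by (auto simp: cong_lattice_def)
  then have "[c * a = c * (u * (l * a1))] (mod M)" "[c * b = c * (u * (l * b1))] (mod M)"
    using inverse by (meson cong_sym cong_trans)+
  then have "[a = (u * l) * a1] (mod M)" "[b = (u * l) * b1] (mod M)"
    using assms by (simp_all add: cong_mult_lcancel mult.assoc)
  then show "(a, b) \<in> cong_lattice M a1 b1" by (auto simp: cong_lattice_def)
next
  assume "(a, b) \<in> cong_lattice M a1 b1"
  then obtain l where "[a = l * a1] (mod M)" "[b = l * b1] (mod M)"
    by (auto simp: cong_lattice_def)
  then have "[c * a = (c * l) * a1] (mod M)" "[c * b = (c * l) * b1] (mod M)"
    by (simp_all add: cong_scalar_left mult.assoc)
  then show "(c * a, c * b) \<in> cong_lattice M a1 b1" by (auto simp: cong_lattice_def)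
qed

lemma cong_lattice_common_factor:
  fixes G M :: int
  assumes G: "G \<noteq> 0" and primitive: "coprime (gcd a1 b1) (G * M)"
  shows "(G * a, G * b) \<in> cong_lattice (G * M) a1 b1 \<longleftrightarrow> (a, b) \<in> cong_lattice M a1 b1"
proof
  assume "(G * a, G * b) \<in> cong_lattice (G * M) a1 b1"
  then obtain l where l: "[G * a = l * a1] (mod G * M)" "[G * b = l * b1] (mod G * M)"
    by (auto simp: cong_lattice_def)
  \<comment> \<open>G divides the multiplier l, since (a1, b1) is primitive modulo G\<close>
  have "G dvd l * a1" "G dvd l * b1"
    using l[THEN cong_modulus_mult] by (metis cong_dvd_iff dvd_triv_left)+
  moreover have "coprime G (gcd a1 b1)" using primitive by (simp add: coprime_commute)
  ultimately obtain l' where "l = G * l'" using coprime_gcd_dvd_cancel by blast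
  then have "[a = l' * a1] (mod M)" "[b = l' * b1] (mod M)"
    using l G by (simp_all add: cong_iff_dvd_diff mult.assoc flip: right_diff_distrib)
  then show "(a, b) \<in> cong_lattice M a1 b1" by (auto simp: cong_lattice_def)
next
  assume "(a, b) \<in> cong_lattice M a1 b1"
  then obtain l where "[a = l * a1] (mod M)" "[b = l * b1] (mod M)"
    by (auto simp: cong_lattice_def)
  then have "[G * a = (G * l) * a1] (mod G * M)" "[G * b = (G * l) * b1] (mod G * M)"
    by (simp_all add: cong_cmult_leftI mult.assoc)
  then show "(G * a, G * b) \<in> cong_lattice (G * M) a1 b1" by (auto simp: cong_lattice_def)
qed

lemma cong_lattice_scale:
  fixes \<gamma> :: int
  assumes \<gamma>: "\<gamma> > 0" and primitive: "coprime (gcd a1 b1) M"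
  shows "(\<gamma> * a, \<gamma> * b) \<in> cong_lattice M a1 b1 \<longleftrightarrow> (a, b) \<in> cong_lattice (M div gcd \<gamma> M) a1 b1"
proof -
  define G where "G = gcd \<gamma> M"
  define M' where "M' = M div G"
  define \<gamma>' where "\<gamma>' = \<gamma> div G"
  have G: "G \<noteq> 0" "M = G * M'" "\<gamma> = G * \<gamma>'" using \<gamma> by (simp_all add: G_def M'_def \<gamma>'_def)
  have "coprime \<gamma>' M'" unfolding \<gamma>'_def M'_def G_def using \<gamma> by (intro div_gcd_coprime) simp
  have "(\<gamma> * a, \<gamma> * b) \<in> cong_lattice M a1 b1 \<longleftrightarrow> (\<gamma>' * a, \<gamma>' * b) \<in> cong_lattice M' a1 b1"
    using cong_lattice_common_factor[OF G(1)] primitive G by (simp add: mult.assoc)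
  also have "\<dots> \<longleftrightarrow> (a, b) \<in> cong_lattice M' a1 b1"
    by (rule cong_lattice_coprime_scale) fact
  finally show ?thesis by (simp add: M'_def G_def)
qed

section \<open>The region R_N\<close>

lemma power_powr_inverse:
  fixes u :: real
  assumes "u \<ge> 0" "n > 0"
  shows "(u ^ n) powr (1 / n) = u"
  using assms by (cases "u = 0") (simp_all add: powr_realpow[symmetric] powr_powr)

lemma powr_inverse_power:
  fixes N :: real
  assumes "N > 0" "n > 0"
  shows "(N powr (1 / n)) ^ n = N"
  using assms by (simp add: powr_realpow[symmetric] powr_powr)

lemma powr_square:
  fixes N :: real
  assumes "N > 0"
  shows "(N powr a) ^ 2 = N powr (2 * a)"
  using assms by (simp add: powr_realpow[symmetric] powr_powr mult.commute)

lemma hom_form_scale: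
  assumes "degree p \<le> d"
  shows "hom_form d p (t * x) (t * y) = t ^ d * hom_form d p x y"
  unfolding hom_form_def sum_distrib_left
proof (rule sum.cong[OF refl])
  fix i assume "i \<in> {..degree p}"
  then have "t ^ i * t ^ (d - i) = t ^ d" using assms by (simp flip: power_add)
  then show "of_int (coeff p i) * (t * x) ^ i * (t * y) ^ (d - i) = t ^ d * (of_int (coeff p i) * x ^ i * y ^ (d - i))"
    by (simp add: power_mult_distrib algebra_simps)
qed

lemma hom_form_eq_poly:
  assumes "degree p \<le> d" "y \<noteq> 0"
  shows "hom_form d p x y = y ^ d * poly (map_poly real_of_int p) (x / y)"
proof -
  have "poly (map_poly real_of_int p) (x / y) = (\<Sum>i\<le>degree p. of_int (coeff p i) * (x / y) ^ i)"
    by (simp add: poly_altdef degree_map_poly coeff_map_poly)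
  then have "y ^ d * poly (map_poly real_of_int p) (x / y)
      = (\<Sum>i\<le>degree p. y ^ d * (of_int (coeff p i) * (x / y) ^ i))"
    by (simp add: sum_distrib_left)
  also have "\<dots> = (\<Sum>i\<le>degree p. of_int (coeff p i) * x ^ i * y ^ (d - i))"
  proof (rule sum.cong[OF refl])
    fix i assume "i \<in> {..degree p}"
    then have "y ^ d = y ^ i * y ^ (d - i)" using assms(1) by (simp flip: power_add)
    then show "y ^ d * (of_int (coeff p i) * (x / y) ^ i) = of_int (coeff p i) * x ^ i * y ^ (d - i)"
      using assms(2) by (simp add: power_divide field_simps)
  qed
  finally show ?thesis by (simp add: hom_form_def)
qed

lemma hom_form_axis:
  assumes "degree p \<le> d"
  shows "hom_form d p x 0 = of_int (coeff p d) * x ^ d"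
proof -
  have "hom_form d p x 0 = (\<Sum>i\<le>degree p. if i = d then of_int (coeff p i) * x ^ i else 0)"
    unfolding hom_form_def using assms by (intro sum.cong) auto
  also have "\<dots> = of_int (coeff p d) * x ^ d"
    using assms by (cases "degree p = d") (auto simp: coeff_eq_0)
  finally show ?thesis .
qed

lemma continuous_on_hom_form: "continuous_on UNIV (\<lambda>z. hom_form d p (fst z) (snd z))"
  unfolding hom_form_def by (intro continuous_intros)

lemma hom_form_row_poly:
  assumes "degree p \<le> d"
  shows "\<exists>q. degree q \<le> d \<and> (\<forall>x. poly q x = hom_form d p x y)"
proof (intro exI conjI allI)
  let ?q = "\<Sum>i\<le>degree p. monom (of_int (coeff p i) * y ^ (d - i)) i"
  show "degree ?q \<le> d"
    by (rule degree_sum_le) (use assms in \<open>auto intro: order.trans[OF degree_monom_le]\<close>)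
  show "poly ?q x = hom_form d p x y" for x
    by (simp add: hom_form_def poly_sum poly_monom algebra_simps)
qed

lemma hom_form_column_poly:
  assumes "degree p \<le> d"
  shows "\<exists>q. degree q \<le> d \<and> (\<forall>y. poly q y = hom_form d p x y)"
proof (intro exI conjI allI)
  let ?q = "\<Sum>i\<le>degree p. monom (of_int (coeff p i) * x ^ i) (d - i)"
  show "degree ?q \<le> d"
    by (rule degree_sum_le) (use assms in \<open>auto intro: order.trans[OF degree_monom_le]\<close>)
  show "poly ?q y = hom_form d p x y" for y
    by (simp add: hom_form_def poly_sum poly_monom algebra_simps)
qed

lemma region_closed: "closed (region f g m N)"
proof -
  have "region f g m N = {z. \<bar>hom_form (4*m) f (fst z) (snd z)\<bar> \<le> (N / 4) powr (1/3)}
      \<inter> {z. \<bar>hom_form (6*m) g (fst z) (snd z)\<bar> \<le> (N / 27) powr (1/2)}"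
    unfolding region_def by auto
  also have "closed \<dots>"
    by (intro closed_Int closed_Collect_le continuous_intros continuous_on_hom_form)
  finally show ?thesis .
qed

lemma mem_region_scale:
  assumes deg: "degree f \<le> 4 * m" "degree g \<le> 6 * m" and t: "t > 0" and N: "N \<ge> 0"
  shows "(t * x, t * y) \<in> region f g m (t ^ (12 * m) * N) \<longleftrightarrow> (x, y) \<in> region f g m N"
proof -
  have "(t ^ (12 * m) * N / c) powr (1 / k) = t ^ (12 * m div k) * (N / c) powr (1 / k)"
    if "c > 0" "k dvd 12 * m" "k > 0" for c :: real and k :: nat
  proof -
    have "t ^ (12 * m) = (t ^ (12 * m div k)) ^ k"
      using that(2) by (simp flip: power_mult)
    then have "(t ^ (12 * m)) powr (1 / k) = t ^ (12 * m div k)"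
      using t that(3) by (simp add: power_powr_inverse)
    moreover have "t ^ (12 * m) * N / c = t ^ (12 * m) * (N / c)" by simp
    ultimately show ?thesis using t N that(1) by (simp only: powr_mult)
  qed
  from this[of 4 3] this[of 27 2] show ?thesis
    using t by (simp add: region_def hom_form_scale deg abs_mult mult_le_cancel_left_pos)
qed

lemma region_scale_image:
  assumes deg: "degree f \<le> 4 * m" "degree g \<le> 6 * m" and t: "t > 0" and N: "N \<ge> 0"
  shows "region f g m (t ^ (12 * m) * N) = (\<lambda>z. t *\<^sub>R z) ` region f g m N"
proof (intro set_eqI iffI)
  fix z assume "z \<in> region f g m (t ^ (12 * m) * N)"
  then have "(fst z / t, snd z / t) \<in> region f g m N"
    using mem_region_scale[OF deg t N, of "fst z / t" "snd z / t"] t by simp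
  moreover have "z = t *\<^sub>R (fst z / t, snd z / t)" using t by (simp add: prod_eq_iff)
  ultimately show "z \<in> (\<lambda>z. t *\<^sub>R z) ` region f g m N" by blast
next
  fix z assume "z \<in> (\<lambda>z. t *\<^sub>R z) ` region f g m N"
  then show "z \<in> region f g m (t ^ (12 * m) * N)"
    using mem_region_scale[OF deg t N] by auto
qed

lemma measure_region_scale:
  assumes deg: "degree f \<le> 4 * m" "degree g \<le> 6 * m" and t: "t > 0" and N: "N \<ge> 0"
  shows "measure lborel (region f g m (t ^ (12 * m) * N)) = t ^ 2 * measure lborel (region f g m N)"
proof -
  have borel: "region f g m M \<in> sets borel" for M using region_closed by simp
  have "measure lborel (region f g m (t ^ (12 * m) * N))
      = measure lebesgue ((\<lambda>z. t *\<^sub>R z + 0) ` region f g m N)"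
    using region_scale_image[OF deg t N] borel[of "t ^ (12 * m) * N"] by (simp add: measure_completion)
  also have "\<dots> = \<bar>t\<bar> ^ DIM(real \<times> real) * measure lebesgue (region f g m N)"
    by (rule measure_lebesgue_affine)
  also have "\<dots> = t ^ 2 * measure lborel (region f g m N)"
    using borel[of N] t by (simp add: measure_completion power2_eq_square)
  finally show ?thesis .
qed

lemma hom_forms_no_common_zero:
  assumes deg: "degree f \<le> 4 * m" "degree g \<le> 6 * m" "degree f = 4 * m \<or> degree g = 6 * m"
    and m: "m > 0"
    and no_common_root: "\<not> (\<exists>t::real. poly (map_poly real_of_int f) t = 0 \<and> poly (map_poly real_of_int g) t = 0)"
    and xy: "(x, y) \<noteq> (0, 0)"
  shows "hom_form (4 * m) f x y \<noteq> 0 \<or> hom_form (6 * m) g x y \<noteq> 0"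
proof (cases "y = 0")
  case False
  then show ?thesis
    using no_common_root by (auto simp: hom_form_eq_poly[OF deg(1) False] hom_form_eq_poly[OF deg(2) False])
next
  case True
  then have "x \<noteq> 0" using xy by simp
  \<comment> \<open>on the axis y = 0 the forms reduce to their top coefficients, one of which is a leading coefficient\<close>
  moreover have "coeff f (4 * m) \<noteq> 0 \<or> coeff g (6 * m) \<noteq> 0"
    using deg(3) m by (metis leading_coeff_0_iff degree_0 mult_eq_0_iff not_gr0 zero_neq_numeral)
  ultimately show ?thesis by (simp add: True hom_form_axis deg(1,2))
qed

lemma region_bounded:
  assumes deg: "degree f \<le> 4 * m" "degree g \<le> 6 * m" "degree f = 4 * m \<or> degree g = 6 * m"
    and m: "m > 0"
    and no_common_root: "\<not> (\<exists>t::real. poly (map_poly real_of_int f) t = 0 \<and> poly (map_poly real_of_int g) t = 0)"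
  shows "bounded (region f g m N)"
proof -
  define \<phi> where "\<phi> z = \<bar>hom_form (4 * m) f (fst z) (snd z)\<bar> + \<bar>hom_form (6 * m) g (fst z) (snd z)\<bar>"
    for z :: "real \<times> real"
  have "continuous_on (sphere 0 1) \<phi>"
    unfolding \<phi>_def by (intro continuous_intros continuous_on_subset[OF continuous_on_hom_form]) auto
  moreover have "(1, 0) \<in> sphere (0 :: real \<times> real) 1" by (simp add: zero_prod_def dist_Pair_Pair)
  ultimately obtain u0 where u0: "u0 \<in> sphere 0 1" and min: "\<And>u. u \<in> sphere 0 1 \<Longrightarrow> \<phi> u0 \<le> \<phi> u"
    using continuous_attains_inf[OF compact_sphere, of 0 1 \<phi>] by blast
  define \<mu> where "\<mu> = \<phi> u0"
  have "u0 \<noteq> (0, 0)" using u0 by (auto simp flip: zero_prod_def)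
  then have "\<mu> > 0"
    using hom_forms_no_common_zero[OF deg m no_common_root, of "fst u0" "snd u0"]
    by (auto simp: \<mu>_def \<phi>_def intro: add_pos_nonneg add_nonneg_pos)
  define c where "c = (N / 4) powr (1/3) + (N / 27) powr (1/2)"
  have "norm z \<le> max 1 (c / \<mu>)" if z: "z \<in> region f g m N" for z
  proof (cases "norm z \<le> 1")
    case False
    define r where "r = norm z"
    define u where "u = (1 / r) *\<^sub>R z"
    have r: "r > 1" using False by (simp add: r_def)
    have "z \<noteq> 0" using r r_def by (metis norm_zero not_one_less_zero)
    then have "u \<in> sphere 0 1" by (simp add: u_def r_def)
    \<comment> \<open>homogeneity: the forms grow at least like r on the sphere of radius r > 1\<close>
    define a where "a = \<bar>hom_form (4 * m) f (fst u) (snd u)\<bar>"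
    define b where "b = \<bar>hom_form (6 * m) g (fst u) (snd u)\<bar>"
    have "z = (r * fst u, r * snd u)" using r by (simp add: u_def prod_eq_iff)
    then have "\<phi> z = r ^ (4 * m) * a + r ^ (6 * m) * b"
      using r by (simp add: \<phi>_def a_def b_def hom_form_scale deg(1,2) abs_mult)
    moreover have "r * a \<le> r ^ (4 * m) * a" "r * b \<le> r ^ (6 * m) * b"
      using r m power_increasing[of 1 "4 * m" r] power_increasing[of 1 "6 * m" r]
      by (simp_all add: a_def b_def mult_right_mono)
    ultimately have "r * \<phi> u \<le> \<phi> z" by (simp add: \<phi>_def a_def b_def distrib_left)
    moreover have "\<mu> \<le> \<phi> u" using min[OF \<open>u \<in> sphere 0 1\<close>] by (simp add: \<mu>_def)
    moreover have "\<phi> z \<le> c" using z by (cases z) (simp add: \<phi>_def c_def region_def)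
    ultimately have "r * \<mu> \<le> c" using r mult_left_mono[of \<mu> "\<phi> u" r] by linarith
    then have "r \<le> c / \<mu>" using \<open>\<mu> > 0\<close> by (simp add: field_simps)
    then show ?thesis by (simp add: r_def)
  qed simp
  then show ?thesis by (rule boundedI)
qed

lemma frontier_poly_sublevel:
  fixes q :: "real poly"
  shows "finite (frontier {x. \<bar>poly q x\<bar> \<le> \<alpha>}) \<and> card (frontier {x. \<bar>poly q x\<bar> \<le> \<alpha>}) \<le> 2 * degree q"
proof (cases "degree q = 0")
  case True
  then obtain c where "q = [:c:]" by (metis degree_eq_zeroE)
  then have "frontier {x. \<bar>poly q x\<bar> \<le> \<alpha>} = {}" by (cases "\<bar>c\<bar> \<le> \<alpha>") auto
  then show ?thesis by simp
next
  case False
  \<comment> \<open>frontier points are roots of q^2 - \<alpha>^2\<close>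
  define r where "r = q * q + [:- (\<alpha>^2):]"
  have "degree (q * q) = 2 * degree q" using False by (subst degree_mult_eq) auto
  then have deg_r: "degree r = 2 * degree q"
    using False unfolding r_def by (subst degree_add_eq_left) auto
  then have "r \<noteq> 0" using False by auto
  have "frontier {x. \<bar>poly q x\<bar> \<le> \<alpha>} \<subseteq> {x. poly r x = 0}"
  proof
    fix x assume x: "x \<in> frontier {x. \<bar>poly q x\<bar> \<le> \<alpha>}"
    have "closed {x. \<bar>poly q x\<bar> \<le> \<alpha>}" by (intro closed_Collect_le continuous_intros)
    then have "\<bar>poly q x\<bar> \<le> \<alpha>" using x by (auto simp: frontier_def)
    moreover have "{x. \<bar>poly q x\<bar> < \<alpha>} \<subseteq> interior {x. \<bar>poly q x\<bar> \<le> \<alpha>}"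
      by (intro interior_maximal open_Collect_less continuous_intros) auto
    ultimately have "\<bar>poly q x\<bar> = \<alpha>" using x by (force simp: frontier_def)
    then have "poly q x * poly q x = \<alpha> ^ 2" by (metis abs_mult_self_eq power2_eq_square)
    then show "x \<in> {x. poly r x = 0}" by (simp add: r_def)
  qed
  then have "finite (frontier {x. \<bar>poly q x\<bar> \<le> \<alpha>})"
    and "card (frontier {x. \<bar>poly q x\<bar> \<le> \<alpha>}) \<le> card {x. poly r x = 0}"
    using poly_roots_finite[OF \<open>r \<noteq> 0\<close>] by (auto intro: finite_subset card_mono)
  then show ?thesis using card_poly_roots_bound[OF \<open>r \<noteq> 0\<close>] deg_r by simp
qed

lemma finite_frontier_Int:
  assumes "finite (frontier A)" "finite (frontier B)"
  shows "finite (frontier (A \<inter> B)) \<and> card (frontier (A \<inter> B)) \<le> card (frontier A) + card (frontier B)"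
proof -
  have "frontier (A \<inter> B) \<subseteq> frontier A \<union> frontier B" by (auto simp: frontier_Int)
  moreover have "card (frontier A \<union> frontier B) \<le> card (frontier A) + card (frontier B)"
    by (rule card_Un_le)
  ultimately show ?thesis using assms by (meson card_mono finite_UnI finite_subset le_trans)
qed

lemma frontier_poly_sublevels_Int:
  fixes q1 q2 :: "real poly"
  shows "finite (frontier ({x. \<bar>poly q1 x\<bar> \<le> \<alpha>} \<inter> {x. \<bar>poly q2 x\<bar> \<le> \<beta>}))
    \<and> card (frontier ({x. \<bar>poly q1 x\<bar> \<le> \<alpha>} \<inter> {x. \<bar>poly q2 x\<bar> \<le> \<beta>})) \<le> 2 * degree q1 + 2 * degree q2"
  using finite_frontier_Int[of "{x. \<bar>poly q1 x\<bar> \<le> \<alpha>}" "{x. \<bar>poly q2 x\<bar> \<le> \<beta>}"]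
    frontier_poly_sublevel[of q1 \<alpha>] frontier_poly_sublevel[of q2 \<beta>]
  by linarith

lemma region_row_frontier:
  assumes "degree f \<le> 4 * m" "degree g \<le> 6 * m"
  shows "finite (frontier {x. (x, y) \<in> region f g m N}) \<and> card (frontier {x. (x, y) \<in> region f g m N}) \<le> 20 * m"
proof -
  obtain q1 q2 where q: "degree q1 \<le> 4 * m" "degree q2 \<le> 6 * m"
    "\<And>x. poly q1 x = hom_form (4 * m) f x y" "\<And>x. poly q2 x = hom_form (6 * m) g x y"
    using hom_form_row_poly[OF assms(1)] hom_form_row_poly[OF assms(2)] by metis
  then have "{x. (x, y) \<in> region f g m N}
      = {x. \<bar>poly q1 x\<bar> \<le> (N / 4) powr (1/3)} \<inter> {x. \<bar>poly q2 x\<bar> \<le> (N / 27) powr (1/2)}"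
    by (auto simp: region_def)
  moreover have "2 * degree q1 + 2 * degree q2 \<le> 20 * m" using q(1,2) by linarith
  ultimately show ?thesis
    using frontier_poly_sublevels_Int[of q1 "(N / 4) powr (1/3)" q2 "(N / 27) powr (1/2)"] by simp
qed

lemma region_column_frontier:
  assumes "degree f \<le> 4 * m" "degree g \<le> 6 * m"
  shows "finite (frontier {y. (x, y) \<in> region f g m N}) \<and> card (frontier {y. (x, y) \<in> region f g m N}) \<le> 20 * m"
proof -
  obtain q1 q2 where q: "degree q1 \<le> 4 * m" "degree q2 \<le> 6 * m"
    "\<And>y. poly q1 y = hom_form (4 * m) f x y" "\<And>y. poly q2 y = hom_form (6 * m) g x y"
    using hom_form_column_poly[OF assms(1)] hom_form_column_poly[OF assms(2)] by metis
  then have "{y. (x, y) \<in> region f g m N}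
      = {y. \<bar>poly q1 y\<bar> \<le> (N / 4) powr (1/3)} \<inter> {y. \<bar>poly q2 y\<bar> \<le> (N / 27) powr (1/2)}"
    by (auto simp: region_def)
  moreover have "2 * degree q1 + 2 * degree q2 \<le> 20 * m" using q(1,2) by linarith
  ultimately show ?thesis
    using frontier_poly_sublevels_Int[of q1 "(N / 4) powr (1/3)" q2 "(N / 27) powr (1/2)"] by simp
qed

lemma region_subset_cball:
  assumes deg: "degree f \<le> 4 * m" "degree g \<le> 6 * m" and m: "m > 0" and N: "N > 0"
    and K: "region f g m 1 \<subseteq> cball 0 K"
  shows "region f g m N \<subseteq> cball 0 (K * N powr (1 / (12 * real m)))"
proof
  fix z assume z: "z \<in> region f g m N"
  define T where "T = N powr (1 / (12 * real m))"
  have T: "T > 0" "T ^ (12 * m) * 1 = N"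
    using N m powr_inverse_power[of N "12 * m"] by (simp_all add: T_def)
  have "z \<in> region f g m (T ^ (12 * m) * 1)" using z T by simp
  moreover have "(1 / T) *\<^sub>R z = (fst z / T, snd z / T)" by (simp add: prod_eq_iff)
  ultimately have "(1 / T) *\<^sub>R z \<in> region f g m 1"
    using mem_region_scale[OF deg T(1), of 1 "fst z / T" "snd z / T"] T by simp
  then have "norm z / T \<le> K" using K T by auto
  then show "z \<in> cball 0 (K * T)" using T by (simp add: field_simps)
qed

lemma origin_in_region:
  assumes "degree f \<le> 4 * m" "degree g \<le> 6 * m" "m > 0" "N \<ge> 0"
  shows "(0, 0) \<in> region f g m N"
  using assms hom_form_scale[of f "4 * m" 0 0 0] hom_form_scale[of g "6 * m" 0 0 0]
  by (simp add: region_def power_0_left)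

section \<open>Counting the lattice points\<close>

lemma int_points_in_small_cball:
  fixes S :: "(real \<times> real) set"
  assumes "S \<subseteq> cball 0 r" "r < 1"
  shows "{p\<in>L. map_prod real_of_int real_of_int p \<in> S} \<subseteq> {0}"
proof
  fix p assume p: "p \<in> {p\<in>L. map_prod real_of_int real_of_int p \<in> S}"
  obtain a b where p_eq: "p = (a, b)" by (cases p)
  then have "norm (real_of_int a, real_of_int b) < 1" using p assms by fastforce
  then have "\<bar>real_of_int a\<bar> < 1" "\<bar>real_of_int b\<bar> < 1"
    using norm_fst_le[of "real_of_int a" "real_of_int b"] norm_snd_le[of "real_of_int b" "real_of_int a"]
    by simp_all
  then have "\<bar>a\<bar> < 1" "\<bar>b\<bar> < 1" by (simp_all flip: of_int_abs)
  then show "p \<in> {0}" using p_eq by (simp add: zero_prod_def)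
qed

lemma card_cong_lattice_points_approx:
  fixes f g :: "int poly" and m :: nat and R N :: real and M a1 b1 :: int
  assumes deg: "degree f \<le> 4 * m" "degree g \<le> 6 * m"
    and M: "M > 0" and primitive: "coprime (gcd a1 b1) M"
    and R: "R \<ge> 1" "region f g m N \<subseteq> cball 0 R"
  defines "P \<equiv> {p \<in> cong_lattice M a1 b1. map_prod real_of_int real_of_int p \<in> region f g m N}"
  shows "finite P"
    and "\<bar>card P - measure lborel (region f g m N) / M\<bar> \<le> 100 * m * R"
proof -
  define k where "k = 20 * m"
  obtain d1 d2 cc where H: "hermite_form (cong_lattice M a1 b1) d1 d2 cc" and "d1 * d2 = M"
    using cong_lattice_hermite_form[OF M primitive] by blast
  have d: "real_of_int d1 \<ge> 1" "real_of_int d2 \<ge> 1" using H by (auto simp: hermite_form_def)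
  have box: "region f g m N \<subseteq> {-R..R} \<times> {-R..R}"
  proof
    fix z assume "z \<in> region f g m N"
    then have "norm z \<le> R" using R(2) by auto
    then show "z \<in> {-R..R} \<times> {-R..R}"
      using norm_fst_le[of "fst z" "snd z"] norm_snd_le[of "snd z" "fst z"]
      by (cases z) (auto simp: abs_le_iff)
  qed
  note count = card_hermite_lattice_region[OF H region_closed box _
      region_row_frontier[OF deg] region_column_frontier[OF deg]]
  show "finite P" using count(1) R by (simp add: P_def)
  have "\<bar>card P - measure lborel (region f g m N) / M\<bar> \<le> k * (2 * R / d2 + 1) + 2 * R * k / d1"
    using count(2) R \<open>d1 * d2 = M\<close> by (simp add: P_def k_def)
  also have "\<dots> \<le> k * (2 * R + 1) + 2 * R * k"
  proof -
    have "2 * R / d2 \<le> 2 * R / 1" "2 * R * k / d1 \<le> 2 * R * k / 1"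
      using d R by (intro divide_left_mono; simp)+
    then show ?thesis by (intro add_mono mult_left_mono) simp_all
  qed
  also have "\<dots> \<le> 5 * k * R"
    using mult_right_mono[OF R(1), of "real k"] by (simp add: algebra_simps)
  finally show "\<bar>card P - measure lborel (region f g m N) / M\<bar> \<le> 100 * m * R"
    by (simp add: k_def)
qed

lemma card_cong_lattice_region:
  fixes f g :: "int poly" and m :: nat and K N :: real and M a1 b1 :: int
  assumes deg: "degree f \<le> 4 * m" "degree g \<le> 6 * m" and m: "m > 0"
    and K: "K \<ge> 1" "region f g m 1 \<subseteq> cball 0 K"
    and M: "M > 0" and primitive: "coprime (gcd a1 b1) M" and N: "N > 0"
  defines "T \<equiv> N powr (1 / (12 * real m))"
    and "P \<equiv> {p \<in> cong_lattice M a1 b1. map_prod real_of_int real_of_int p \<in> region f g m N}"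
  shows "\<bar>card (P - {0}) - T ^ 2 * measure lborel (region f g m 1) / M\<bar>
      \<le> ((100 * m + 1) * K + measure lborel (region f g m 1)) * T"
    and "K * T < 1 \<Longrightarrow> P - {0} = {}"
proof -
  define V where "V = measure lborel (region f g m 1)"
  have T: "T > 0" "T ^ (12 * m) * 1 = N"
    using N m powr_inverse_power[of N "12 * m"] by (simp_all add: T_def)
  have ball: "region f g m N \<subseteq> cball 0 (K * T)"
    unfolding T_def by (rule region_subset_cball[OF deg m N K(2)])
  show empty: "P - {0} = {}" if "K * T < 1"
    using int_points_in_small_cball[OF ball that] by (auto simp: P_def)
  have V: "V \<ge> 0" "measure lborel (region f g m N) = T ^ 2 * V"
    using measure_region_scale[OF deg T(1), of 1] T by (simp_all add: V_def)
  have "\<bar>card (P - {0}) - T ^ 2 * V / M\<bar> \<le> ((100 * m + 1) * K + V) * T"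
  proof (cases "K * T < 1")
    case True
    have "T \<le> K * T" using K(1) T(1) by simp
    then have "T \<le> 1" using True by linarith
    have "T ^ 2 * V / M \<le> T ^ 2 * V / 1"
      using M V(1) by (intro divide_left_mono) simp_all
    also have "\<dots> \<le> T * V"
      using mult_right_mono[OF \<open>T \<le> 1\<close>, of "T * V"] T(1) V(1) by (simp add: power2_eq_square)
    finally have "T ^ 2 * V / M \<le> T * V" .
    moreover have "0 \<le> T ^ 2 * V / M" "0 \<le> (100 * m + 1) * K * T" using K(1) T(1) V(1) M by simp_all
    moreover have "card (P - {0}) = 0" using empty[OF True] by (simp only: card.empty)
    ultimately show ?thesis by (simp add: algebra_simps)
  next
    case False
    then have KT: "K * T \<ge> 1" by simp
    note approx = card_cong_lattice_points_approx[OF deg M primitive KT ball, folded P_def]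
    have "0 \<in> P" using cong_lattice_subgroup(1) origin_in_region[OF deg m] N
      by (simp add: P_def zero_prod_def)
    then have "real (card (P - {0})) = card P - 1"
      using approx(1) by (simp add: card_Diff_singleton of_nat_diff card_gt_0_iff)
    then have "\<bar>card (P - {0}) - T ^ 2 * V / M\<bar> \<le> 100 * m * (K * T) + 1"
      using approx(2) V(2) by simp
    also have "\<dots> \<le> ((100 * m + 1) * K + V) * T"
    proof -
      have "0 \<le> T * V" using T(1) V(1) by simp
      then show ?thesis using KT by (simp add: algebra_simps)
    qed
    finally show ?thesis .
  qed
  then show "\<bar>card (P - {0}) - T ^ 2 * measure lborel (region f g m 1) / M\<bar>
      \<le> ((100 * m + 1) * K + measure lborel (region f g m 1)) * T"
    by (simp only: V_def)
qed

lemma count_set_eq_scaled: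
  fixes f g :: "int poly" and m :: nat and N :: real and \<gamma> M a1 b1 :: int
  assumes deg: "degree f \<le> 4 * m" "degree g \<le> 6 * m" and \<gamma>: "\<gamma> > 0"
    and primitive: "coprime (gcd a1 b1) M" and N: "N \<ge> 0"
  shows "count_set f g m N \<gamma> M a1 b1 = (\<lambda>(a, b). (\<gamma> * a, \<gamma> * b)) `
    ({p \<in> cong_lattice (M div gcd \<gamma> M) a1 b1. map_prod real_of_int real_of_int p \<in> region f g m (N / \<gamma> ^ (12 * m))} - {0})"
proof -
  have scale: "(real_of_int (\<gamma> * a), real_of_int (\<gamma> * b)) \<in> region f g m N
      \<longleftrightarrow> (real_of_int a, real_of_int b) \<in> region f g m (N / \<gamma> ^ (12 * m))" for a b
    using mem_region_scale[OF deg, of "real_of_int \<gamma>" "N / \<gamma> ^ (12 * m)"] \<gamma> N by simp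
  show ?thesis
  proof (intro set_eqI iffI)
    fix p assume "p \<in> count_set f g m N \<gamma> M a1 b1"
    then obtain a b where p: "p = (a, b)" "(a, b) \<noteq> (0, 0)" "\<gamma> dvd a" "\<gamma> dvd b"
      "(real_of_int a, real_of_int b) \<in> region f g m N" "(a, b) \<in> cong_lattice M a1 b1"
      by (cases p) (auto simp: count_set_def cong_lattice_def)
    then obtain a' b' where "a = \<gamma> * a'" "b = \<gamma> * b'" by (auto elim!: dvdE)
    then show "p \<in> (\<lambda>(a, b). (\<gamma> * a, \<gamma> * b)) ` ({p \<in> cong_lattice (M div gcd \<gamma> M) a1 b1.
        map_prod real_of_int real_of_int p \<in> region f g m (N / \<gamma> ^ (12 * m))} - {0})"
      using p cong_lattice_scale[OF \<gamma> primitive] scale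
      by (intro rev_image_eqI[of "(a', b')"]) (auto simp: zero_prod_def)
  next
    fix p assume "p \<in> (\<lambda>(a, b). (\<gamma> * a, \<gamma> * b)) ` ({p \<in> cong_lattice (M div gcd \<gamma> M) a1 b1.
        map_prod real_of_int real_of_int p \<in> region f g m (N / \<gamma> ^ (12 * m))} - {0})"
    then show "p \<in> count_set f g m N \<gamma> M a1 b1"
      using cong_lattice_scale[OF \<gamma> primitive] scale \<gamma>
      by (auto simp: count_set_def cong_lattice_def zero_prod_def)
  qed
qed

lemma count_set_estimate:
  fixes f g :: "int poly" and m :: nat and K N :: real and \<gamma> M a1 b1 :: int
  assumes deg: "degree f \<le> 4 * m" "degree g \<le> 6 * m" and m: "m > 0"
    and K: "K \<ge> 1" "region f g m 1 \<subseteq> cball 0 K"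
    and M: "M > 0" and \<gamma>: "\<gamma> > 0" and primitive: "coprime (gcd a1 b1) M" and N: "N > 0"
  defines "V \<equiv> measure lborel (region f g m 1)"
  shows "\<bar>real (card (count_set f g m N \<gamma> M a1 b1))
           - N powr (1 / (6 * real m)) * V * real_of_int (gcd \<gamma> M) / (real_of_int \<gamma> ^ 2 * real_of_int M)\<bar>
         \<le> ((100 * m + 1) * K + V) * N powr (1 / (12 * real m)) / real_of_int \<gamma>"
    and "real_of_int \<gamma> > K * N powr (1 / (12 * real m)) \<Longrightarrow> count_set f g m N \<gamma> M a1 b1 = {}"
proof -
  define G where "G = gcd \<gamma> M"
  define N' where "N' = N / \<gamma> ^ (12 * m)"
  define T where "T = N powr (1 / (12 * real m))"
  define P' where "P' = {p \<in> cong_lattice (M div G) a1 b1. map_prod real_of_int real_of_int p \<in> region f g m N'}"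
  have G: "G > 0" "G dvd M" using M by (simp_all add: G_def)
  have M': "M div G > 0" using M G by (simp add: pos_imp_zdiv_pos_iff zdvd_imp_le)
  have primitive': "coprime (gcd a1 b1) (M div G)"
    using primitive G(2) by (metis coprime_mult_right_iff dvd_div_mult_self)
  have N': "N' > 0" using N \<gamma> by (simp add: N'_def)
  have T': "N' powr (1 / (12 * real m)) = T / \<gamma>"
    using N \<gamma> m power_powr_inverse[of "real_of_int \<gamma>" "12 * m"]
    by (simp add: N'_def T_def powr_divide)
  have count: "count_set f g m N \<gamma> M a1 b1 = (\<lambda>(a, b). (\<gamma> * a, \<gamma> * b)) ` (P' - {0})"
    unfolding P'_def N'_def G_def using count_set_eq_scaled[OF deg \<gamma> primitive] N by simp
  have "inj_on (\<lambda>(a, b). (\<gamma> * a, \<gamma> * b)) (P' - {0})" using \<gamma> by (auto simp: inj_on_def)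
  then have card: "card (count_set f g m N \<gamma> M a1 b1) = card (P' - {0})"
    by (simp add: count card_image)
  note estimate = card_cong_lattice_region[OF deg m K M' primitive' N', folded P'_def, unfolded T']
  have "(T / \<gamma>) ^ 2 * V / real_of_int (M div G)
      = N powr (1 / (6 * real m)) * V * G / (real_of_int \<gamma> ^ 2 * M)"
    using G N powr_square[OF N, of "1 / (12 * real m)"]
    by (simp add: T_def real_of_int_div power_divide field_simps)
  then show "\<bar>real (card (count_set f g m N \<gamma> M a1 b1))
           - N powr (1 / (6 * real m)) * V * real_of_int (gcd \<gamma> M) / (real_of_int \<gamma> ^ 2 * real_of_int M)\<bar>
         \<le> ((100 * m + 1) * K + V) * N powr (1 / (12 * real m)) / real_of_int \<gamma>"
    using estimate(1) by (simp add: card V_def G_def T_def)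
  show "count_set f g m N \<gamma> M a1 b1 = {}" if "real_of_int \<gamma> > K * N powr (1 / (12 * real m))"
    using estimate(2) that \<gamma> by (simp add: count T_def field_simps)
qed

lemma degree_bounds_of_weight:
  assumes "max (real (degree f) / 2) (real (degree g) / 3) = 2 * real m"
  shows "degree f \<le> 4 * m" "degree g \<le> 6 * m" "degree f = 4 * m \<or> degree g = 6 * m"
proof -
  have "real (degree f) \<le> real (4 * m)" "real (degree g) \<le> real (6 * m)"
    "real (degree f) = real (4 * m) \<or> real (degree g) = real (6 * m)"
    using assms by (auto simp: max_def split: if_splits)
  then show "degree f \<le> 4 * m" "degree g \<le> 6 * m" "degree f = 4 * m \<or> degree g = 6 * m"
    by (simp_all only: of_nat_le_iff of_nat_eq_iff)
qed

theorem lemma4p4: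
  fixes f g :: "int poly" and m :: nat
  assumes m_pos: "m > 0"
    and disc: "smult 4 (f ^ 3) + smult 27 (g ^ 2) \<noteq> 0"
    and no_common_root: "\<not> (\<exists>t::real. poly (map_poly real_of_int f) t = 0 \<and> poly (map_poly real_of_int g) t = 0)"
    and deg: "max (real (degree f) / 2) (real (degree g) / 3) = 2 * real m"
  shows "\<exists>C c::real. c > 0 \<and>
    (\<forall>M \<gamma> a1 b1 :: int. \<forall>N::real.
       M > 0 \<longrightarrow> \<gamma> > 0 \<longrightarrow> squarefree \<gamma> \<longrightarrow> gcd (gcd a1 b1) M = 1 \<longrightarrow> N \<ge> 1 \<longrightarrow>
       \<bar>real (card (count_set f g m N \<gamma> M a1 b1))
          - N powr (1 / (6 * real m)) * measure lborel (region f g m 1) * real_of_int (gcd \<gamma> M)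
              / (real_of_int \<gamma> ^ 2 * real_of_int M)\<bar>
         \<le> C * N powr (1 / (12 * real m)) / real_of_int \<gamma>
       \<and> (real_of_int \<gamma> > c * N powr (1 / (12 * real m)) \<longrightarrow> count_set f g m N \<gamma> M a1 b1 = {}))"
proof -
  note degrees = degree_bounds_of_weight[OF deg]
  obtain K where K: "K \<ge> 1" "region f g m 1 \<subseteq> cball 0 K"
  proof -
    obtain B where "\<forall>z \<in> region f g m 1. norm z \<le> B"
      using region_bounded[OF degrees m_pos no_common_root, of 1] unfolding bounded_iff by blast
    then have "region f g m 1 \<subseteq> cball 0 (max 1 B)"
      unfolding subset_iff mem_cball_0 by (simp add: le_max_iff_disj)
    then show thesis by (rule that[rotated]) simp
  qed
  show ?thesis
  proof (rule exI[of _ "(100 * m + 1) * K + measure lborel (region f g m 1)"], rule exI[of _ K],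
      intro conjI allI impI)
    show "K > 0" using K(1) by simp
  next
    fix M \<gamma> a1 b1 :: int and N :: real
    assume "M > 0" "\<gamma> > 0" "squarefree \<gamma>" "gcd (gcd a1 b1) M = 1" "N \<ge> 1"
    then have "M > 0" "\<gamma> > 0" "coprime (gcd a1 b1) M" "N > 0" by (simp_all add: coprime_iff_gcd_eq_1)
    note estimate = count_set_estimate[OF degrees(1,2) m_pos K this]
    show "\<bar>real (card (count_set f g m N \<gamma> M a1 b1))
        - N powr (1 / (6 * real m)) * measure lborel (region f g m 1) * real_of_int (gcd \<gamma> M)
          / (real_of_int \<gamma> ^ 2 * real_of_int M)\<bar>
      \<le> ((100 * m + 1) * K + measure lborel (region f g m 1)) * N powr (1 / (12 * real m)) / real_of_int \<gamma>"
      by (fact estimate(1))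
    show "count_set f g m N \<gamma> M a1 b1 = {}" if "real_of_int \<gamma> > K * N powr (1 / (12 * real m))"
      by (fact estimate(2)[OF that])
  qed
qed

end
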